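(* Let $\mathbb{D}$ be $[0,1]^2$ or a mesh and let $A,B:\mathbb{D}\to\mathbb{R}$ satisfy (Q1) $A\le B$ and (Q2) $L^{(A,B)}(R)\ge0$ for all $R\in\mathfrak{R}$. Then for all $\mathbf{x}\in\mathbb{D}$, $$P_M^{(A,B)}(\mathbf{x})+P_O^{(A,B)}(\mathbf{x})\ge B(\mathbf{x})-A(\mathbf{x}).$$
   Context: A rectangle is $[s_1,s_2]\times[t_1,t_2]$ with $s_1<s_2$, $t_1<t_2$ and corners in $\mathbb{D}$; main corners: southwest and northeast; opposite corners: southeast and northwest. $\mathfrak{R}$ is the set of finite formal unions $R=R_1\sqcup\dots\sqcup R_n$ of rectangles (repetitions allowed), with multiplicity $m_R(\mathbf{y})=\sum_i m_{R_i}(\mathbf{y})$, where $m_{R_i}(\mathbf{y})$ is $1$ at main corners, $-1$ at opposite corners, $0$ elsewhere. $L^{(A,B)}(R)=\sum_{m_R(\mathbf{y})>0}B(\mathbf{y})m_R(\mathbf{y})+\sum_{m_R(\mathbf{y})<0}A(\mathbf{y})m_R(\mathbf{y})$; $P_M^{(A,B)}(\mathbf{x})=\inf\{L^{(A,B)}(R)/m_R(\mathbf{x}):m_R(\mathbf{x})>0\}$; $P_O^{(A,B)}(\mathbf{x})=\inf\{L^{(A,B)}(R)/(-m_R(\mathbf{x})):m_R(\mathbf{x})<0\}$, infima over $R\in\mathfrak{R}$ and $\inf\emptyset=+\infty$. *)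

theory Defs
  imports "HOL-Analysis.Analysis" "HOL-Library.Extended_Real"
begin

type_synonym point = "real \<times> real"

text \<open>A rectangle [s1,s2] x [t1,t2] is encoded as the tuple (s1, s2, t1, t2).\<close>
type_synonym rect = "real \<times> real \<times> real \<times> real"

definition is_mesh :: "point set \<Rightarrow> bool" where
  "is_mesh D \<longleftrightarrow> (\<exists>S T :: real set. finite S \<and> finite T \<and> {0,1} \<subseteq> S \<and> S \<subseteq> {0..1}
      \<and> {0,1} \<subseteq> T \<and> T \<subseteq> {0..1} \<and> D = S \<times> T)"

definition admissible_domain :: "point set \<Rightarrow> bool" where
  "admissible_domain D \<longleftrightarrow> D = {0..1} \<times> {0..1} \<or> is_mesh D"

definition rect_in :: "point set \<Rightarrow> rect \<Rightarrow> bool" where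
  "rect_in D r = (case r of (s1, s2, t1, t2) \<Rightarrow>
      s1 < s2 \<and> t1 < t2 \<and> (s1, t1) \<in> D \<and> (s2, t2) \<in> D \<and> (s2, t1) \<in> D \<and> (s1, t2) \<in> D)"

definition rect_corners :: "rect \<Rightarrow> point set" where
  "rect_corners r = (case r of (s1, s2, t1, t2) \<Rightarrow> {(s1, t1), (s2, t2), (s2, t1), (s1, t2)})"

definition rect_mult :: "rect \<Rightarrow> point \<Rightarrow> int" where
  "rect_mult r y = (case r of (s1, s2, t1, t2) \<Rightarrow>
      (if y = (s1, t1) \<or> y = (s2, t2) then 1
       else if y = (s2, t1) \<or> y = (s1, t2) then -1 else 0))"

text \<open>Finite formal unions of rectangles (repetitions allowed) are lists of rectangles.\<close>
definition frakR :: "point set \<Rightarrow> rect list set" where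
  "frakR D = {R. R \<noteq> [] \<and> (\<forall>r \<in> set R. rect_in D r)}"

definition mult :: "rect list \<Rightarrow> point \<Rightarrow> int" where
  "mult R y = (\<Sum>r\<leftarrow>R. rect_mult r y)"

definition union_corners :: "rect list \<Rightarrow> point set" where
  "union_corners R = (\<Union>r \<in> set R. rect_corners r)"

text \<open>L^(A,B)(R); the sum is over the finitely many corner points, which contain all
  points of nonzero multiplicity.\<close>
definition Lfun :: "(point \<Rightarrow> real) \<Rightarrow> (point \<Rightarrow> real) \<Rightarrow> rect list \<Rightarrow> real" where
  "Lfun A B R = (\<Sum>y \<in> union_corners R.
      (if mult R y > 0 then B y * of_int (mult R y)
       else if mult R y < 0 then A y * of_int (mult R y) else 0))"

definition PM :: "point set \<Rightarrow> (point \<Rightarrow> real) \<Rightarrow> (point \<Rightarrow> real) \<Rightarrow> point \<Rightarrow> ereal" where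
  "PM D A B x = Inf {ereal (Lfun A B R / of_int (mult R x)) | R. R \<in> frakR D \<and> mult R x > 0}"

definition PO :: "point set \<Rightarrow> (point \<Rightarrow> real) \<Rightarrow> (point \<Rightarrow> real) \<Rightarrow> point \<Rightarrow> ereal" where
  "PO D A B x = Inf {ereal (Lfun A B R / of_int (- mult R x)) | R. R \<in> frakR D \<and> mult R x < 0}"

end

theory Submission
  imports Defs
begin

text \<open>The cost of a point y carrying multiplicity m is B y per unit of positive and A y per
  unit of negative multiplicity; by (Q1) it is subadditive in m, with defect (B x - A x) k
  when multiplicities k and -k cancel. If R1 has multiplicity a > 0 and R2 multiplicity
  -b < 0 at x, then b copies of R1 together with a copies of R2 cancel at x, so (Q2) gives
  0 \<le> b L(R1) + a L(R2) - a b (B x - A x). Dividing by a b and taking infima over R1 and R2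
  yields the theorem.\<close>

definition corner_cost :: "(point \<Rightarrow> real) \<Rightarrow> (point \<Rightarrow> real) \<Rightarrow> point \<Rightarrow> int \<Rightarrow> real" where
  "corner_cost A B y m = B y * of_int (max m 0) + A y * of_int (min m 0)"

lemma corner_cost_0 [simp]: "corner_cost A B y 0 = 0"
  by (simp add: corner_cost_def)

lemma corner_cost_eq: "corner_cost A B y m = (B y - A y) * of_int (max m 0) + A y * of_int m"
proof -
  have "real_of_int (min m 0) = of_int m - of_int (max m 0)"
    by linarith
  then show ?thesis
    by (simp add: corner_cost_def algebra_simps)
qed

lemma corner_cost_scale:
  assumes "k \<ge> 0"
  shows "corner_cost A B y (k * m) = of_int k * corner_cost A B y m"
proof -
  have "max (k * m) 0 = k * max m 0"
    using assms by (auto simp: max_def mult_left_mono mult_le_0_iff)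
  then show ?thesis
    by (simp add: corner_cost_eq algebra_simps)
qed

lemma corner_cost_add:
  assumes "A y \<le> B y"
  shows "corner_cost A B y (m + n) \<le> corner_cost A B y m + corner_cost A B y n"
proof -
  have "(B y - A y) * of_int (max (m + n) 0) \<le> (B y - A y) * (of_int (max m 0) + of_int (max n 0))"
    using assms by (intro mult_left_mono) linarith+
  then show ?thesis
    by (simp add: corner_cost_eq algebra_simps)
qed

lemma corner_cost_cancel: "corner_cost A B y k + corner_cost A B y (- k) = of_int \<bar>k\<bar> * (B y - A y)"
  by (simp add: corner_cost_eq max_def algebra_simps)

lemma mult_append: "mult (R1 @ R2) y = mult R1 y + mult R2 y"
  by (simp add: mult_def)

lemma mult_concat_replicate: "mult (concat (replicate n R)) y = int n * mult R y"
  by (induction n) (simp_all add: mult_def algebra_simps)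

lemma mult_eq_0_outside_corners:
  assumes "y \<notin> union_corners R"
  shows "mult R y = 0"
proof -
  have "rect_mult r y = 0" if "r \<in> set R" for r
    using assms that
    by (auto simp: union_corners_def rect_corners_def rect_mult_def split: prod.splits)
  then show ?thesis
    unfolding mult_def by (simp cong: map_cong)
qed

lemma finite_union_corners: "finite (union_corners R)"
  by (auto simp: union_corners_def rect_corners_def split: prod.splits)

lemma union_corners_append: "union_corners (R1 @ R2) = union_corners R1 \<union> union_corners R2"
  by (simp add: union_corners_def)

lemma union_corners_subset_domain: "R \<in> frakR D \<Longrightarrow> union_corners R \<subseteq> D"
  by (auto simp: frakR_def union_corners_def rect_in_def rect_corners_def split: prod.splits)

lemma Lfun_eq_sum_corner_cost:
  assumes "finite V" and "union_corners R \<subseteq> V"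
  shows "Lfun A B R = (\<Sum>y\<in>V. corner_cost A B y (mult R y))"
  unfolding Lfun_def
proof (rule sum.mono_neutral_cong_left)
  show "\<forall>y\<in>V - union_corners R. corner_cost A B y (mult R y) = 0"
    by (simp add: mult_eq_0_outside_corners)
  show "(if mult R y > 0 then B y * of_int (mult R y)
        else if mult R y < 0 then A y * of_int (mult R y) else 0) = corner_cost A B y (mult R y)" for y
    by (simp add: corner_cost_def max_def min_def)
qed (use assms in auto)

lemma Lfun_concat_replicate: "Lfun A B (concat (replicate n R)) = of_nat n * Lfun A B R"
proof -
  have "union_corners (concat (replicate n R)) \<subseteq> union_corners R"
    by (auto simp: union_corners_def)
  then have "Lfun A B (concat (replicate n R))
      = (\<Sum>y\<in>union_corners R. corner_cost A B y (int n * mult R y))"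
    using Lfun_eq_sum_corner_cost[OF finite_union_corners] by (simp add: mult_concat_replicate)
  also have "\<dots> = of_nat n * Lfun A B R"
    using Lfun_eq_sum_corner_cost[OF finite_union_corners order_refl]
    by (simp add: corner_cost_scale sum_distrib_left)
  finally show ?thesis .
qed

lemma Lfun_append_cancel:
  assumes A_le_B: "\<And>y. y \<in> union_corners (R1 @ R2) \<Longrightarrow> A y \<le> B y"
    and "mult R1 x = k" and "mult R2 x = - k"
  shows "Lfun A B (R1 @ R2) + of_int \<bar>k\<bar> * (B x - A x) \<le> Lfun A B R1 + Lfun A B R2"
proof -
  define V where "V = insert x (union_corners (R1 @ R2))"
  define c where "c R y = corner_cost A B y (mult R y)" for R y
  have V: "finite V" "x \<in> V"
    by (simp_all add: V_def finite_union_corners)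
  have L: "Lfun A B R = sum (c R) V" if "R \<in> {R1, R2, R1 @ R2}" for R
    unfolding c_def using that V
    by (intro Lfun_eq_sum_corner_cost) (auto simp: V_def union_corners_append)
  have "sum (c (R1 @ R2)) (V - {x}) \<le> (\<Sum>y\<in>V - {x}. c R1 y + c R2 y)"
    using A_le_B by (intro sum_mono) (auto simp: c_def V_def mult_append corner_cost_add)
  moreover have "c R1 x + c R2 x = of_int \<bar>k\<bar> * (B x - A x)" "c (R1 @ R2) x = 0"
    using assms(2,3) by (simp_all add: c_def mult_append corner_cost_cancel)
  ultimately show ?thesis
    using V by (simp add: L sum.remove sum.distrib)
qed

lemma frakR_append: "R1 \<in> frakR D \<Longrightarrow> R2 \<in> frakR D \<Longrightarrow> R1 @ R2 \<in> frakR D"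
  by (auto simp: frakR_def)

lemma frakR_concat_replicate: "n > 0 \<Longrightarrow> R \<in> frakR D \<Longrightarrow> concat (replicate n R) \<in> frakR D"
  by (auto simp: frakR_def)

lemma Lfun_quotients_ge:
  assumes Q1: "\<And>y. y \<in> D \<Longrightarrow> A y \<le> B y"
    and Q2: "\<And>R. R \<in> frakR D \<Longrightarrow> Lfun A B R \<ge> 0"
    and R1: "R1 \<in> frakR D" "mult R1 x > 0"
    and R2: "R2 \<in> frakR D" "mult R2 x < 0"
  shows "B x - A x \<le> Lfun A B R1 / of_int (mult R1 x) + Lfun A B R2 / of_int (- mult R2 x)"
proof -
  define a where "a = nat (mult R1 x)"
  define b where "b = nat (- mult R2 x)"
  have "a > 0" "b > 0" and mult_x: "mult R1 x = int a" "mult R2 x = - int b"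
    using R1 R2 by (simp_all add: a_def b_def)
  define S1 where "S1 = concat (replicate b R1)"
  define S2 where "S2 = concat (replicate a R2)"
  have "S1 @ S2 \<in> frakR D"
    unfolding S1_def S2_def using R1 R2 \<open>a > 0\<close> \<open>b > 0\<close>
    by (intro frakR_append frakR_concat_replicate)
  then have "Lfun A B (S1 @ S2) \<ge> 0" and "\<And>y. y \<in> union_corners (S1 @ S2) \<Longrightarrow> A y \<le> B y"
    using Q1 Q2 union_corners_subset_domain by blast+
  moreover have "mult S1 x = int (a * b)" "mult S2 x = - int (a * b)"
    by (simp_all add: S1_def S2_def mult_concat_replicate mult_x)
  ultimately have "of_nat (a * b) * (B x - A x) \<le> of_nat b * Lfun A B R1 + of_nat a * Lfun A B R2"
    using Lfun_append_cancel[of S1 S2 A B x "int (a * b)"]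
    by (simp add: S1_def S2_def Lfun_concat_replicate)
  then have "B x - A x \<le> (of_nat b * Lfun A B R1 + of_nat a * Lfun A B R2) / (of_nat a * of_nat b)"
    using \<open>a > 0\<close> \<open>b > 0\<close> by (simp add: pos_le_divide_eq mult.commute)
  also have "\<dots> = Lfun A B R1 / of_nat a + Lfun A B R2 / of_nat b"
    using \<open>a > 0\<close> \<open>b > 0\<close> by (simp add: field_simps)
  finally show ?thesis
    by (simp add: mult_x)
qed

lemma ereal_Inf_add_Inf_ge:
  fixes S T :: "real set"
  assumes "\<And>s t. s \<in> S \<Longrightarrow> t \<in> T \<Longrightarrow> c \<le> s + t"
  shows "ereal c \<le> Inf (ereal ` S) + Inf (ereal ` T)"
proof (cases "S = {} \<or> T = {}")
  case True
  \<comment> \<open>One infimum is \<open>\<infinity>\<close>, which absorbs even \<open>-\<infinity>\<close> in ereal addition.\<close>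
  then show ?thesis
    by (auto simp: top_ereal_def)
next
  case False
  then obtain s0 t0 where "s0 \<in> S" "t0 \<in> T"
    by blast
  have "bdd_below S"
    using assms \<open>t0 \<in> T\<close> by (intro bdd_belowI[of _ "c - t0"]) (auto simp: algebra_simps)
  have "bdd_below T"
    using assms[OF \<open>s0 \<in> S\<close>] by (intro bdd_belowI[of _ "c - s0"]) (simp add: diff_le_eq add.commute)
  have "c - s \<le> Inf T" if "s \<in> S" for s
    using assms[OF that] False by (intro cInf_greatest) (auto simp: diff_le_eq add.commute)
  then have "c - Inf T \<le> Inf S"
    using False by (intro cInf_greatest) (auto simp: algebra_simps)
  then show ?thesis
    using False \<open>bdd_below S\<close> \<open>bdd_below T\<close> by (simp flip: ereal_Inf')
qed

theorem mainTheorem12: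
  fixes D :: "point set" and A B :: "point \<Rightarrow> real"
  assumes "admissible_domain D"
    and Q1: "\<And>y. y \<in> D \<Longrightarrow> A y \<le> B y"
    and Q2: "\<And>R. R \<in> frakR D \<Longrightarrow> Lfun A B R \<ge> 0"
    and "x \<in> D"
  shows "PM D A B x + PO D A B x \<ge> ereal (B x - A x)"
proof -
  define S where "S = (\<lambda>R. Lfun A B R / of_int (mult R x)) ` {R \<in> frakR D. mult R x > 0}"
  define T where "T = (\<lambda>R. Lfun A B R / of_int (- mult R x)) ` {R \<in> frakR D. mult R x < 0}"
  have "PM D A B x = Inf (ereal ` S)" "PO D A B x = Inf (ereal ` T)"
    by (simp_all add: PM_def PO_def S_def T_def image_image setcompr_eq_image)
  moreover have "B x - A x \<le> s + t" if "s \<in> S" "t \<in> T" for s t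
    using that Lfun_quotients_ge[OF Q1 Q2] unfolding S_def T_def by blast
  ultimately show ?thesis
    by (simp add: ereal_Inf_add_Inf_ge)
qed

end
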